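(* Let $d\ge2$ and suppose that either $d=2$ and $p\in(2,6)$, or $d\ge3$ and $p\in(2,2^* )$. Then for every $\theta\in(\vartheta(p,3),1)$, $\Lambda_2(\theta,p,d)>\frac{(d-1)\alpha}{4(p-2)}\cdot\frac{\beta\theta(6-p)-\alpha\big(1-\theta+\beta\theta\,\mathsf N^{-1/\beta}\big)}{\beta\theta(6-p)\mathsf N^{1/\beta}-\alpha(\beta\theta+1-\theta)}$, where $\alpha=2p\theta-3(p-2)$, $\beta=1-\frac{p-2}{2p\theta}$ and $\mathsf N=\mathsf N(\theta,p)$.
   Context: $2^*=2d/(d-2)$ for $d\ge3$; $\vartheta(p,3)=\frac{3(p-2)}{2p}$. Let $\mathsf K^*_{\rm CKN}(\theta,p,\Lambda)=\big[\tfrac{2p\theta+2-p}{(p-2)^2}\big]^{\frac{p-2}{2p}}\big[\tfrac{2p\theta}{2p\theta+2-p}\big]^{\theta}\big[\tfrac{p+2}{4}\big]^{\frac{6-p}{2p}}\Big[\tfrac{\sqrt\pi\,\Gamma(\frac2{p-2})}{\Gamma(\frac2{p-2}+\frac12)}\Big]^{\frac{p-2}{p}}\Lambda^{\theta-\frac{p-2}{2p}}$, $q^*(\theta,p)=\frac{2p\theta}{2-p(1-\theta)}$, $\mathsf N(\theta,p)=\mathsf K^*_{\rm CKN}(\theta,p,1)^{1/\theta}/\mathsf K^*_{\rm CKN}(1,q^*(\theta,p),1)$. $\mathsf x^*(\theta,p)$ is the unique root in $(\mathsf N^{1/\beta},\infty)$ of $\theta(6-p)(x^\beta-\mathsf N)x-(2p\theta-3(p-2))\big(\theta(x^\beta-\mathsf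 N)+(1-\theta)(x-1)\mathsf N\big)=0$, and $\Lambda_2(\theta,p,d)=\frac14(d-1)\frac{2p\theta-3(p-2)}{(p-2)\mathsf x^*(\theta,p)}$. *)

theory Defs
  imports "HOL-Analysis.Analysis"
begin

definition crit_exp :: "nat \<Rightarrow> real" where
  "crit_exp d = 2 * real d / (real d - 2)"

definition vartheta :: "real \<Rightarrow> real \<Rightarrow> real" where
  "vartheta p n = n * (p - 2) / (2 * p)"

definition K_CKN :: "real \<Rightarrow> real \<Rightarrow> real \<Rightarrow> real" where
  "K_CKN \<theta> p \<Lambda> =
     ((2*p*\<theta> + 2 - p) / (p - 2)^2) powr ((p - 2) / (2*p))
   * ((2*p*\<theta>) / (2*p*\<theta> + 2 - p)) powr \<theta>
   * ((p + 2) / 4) powr ((6 - p) / (2*p))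
   * (sqrt pi * Gamma (2 / (p - 2)) / Gamma (2 / (p - 2) + 1/2)) powr ((p - 2) / p)
   * \<Lambda> powr (\<theta> - (p - 2) / (2*p))"

definition q_star :: "real \<Rightarrow> real \<Rightarrow> real" where
  "q_star \<theta> p = 2*p*\<theta> / (2 - p*(1 - \<theta>))"

definition N_ratio :: "real \<Rightarrow> real \<Rightarrow> real" where
  "N_ratio \<theta> p = K_CKN \<theta> p 1 powr (1/\<theta>) / K_CKN 1 (q_star \<theta> p) 1"

definition beta_exp :: "real \<Rightarrow> real \<Rightarrow> real" where
  "beta_exp \<theta> p = 1 - (p - 2) / (2*p*\<theta>)"

definition x_eq :: "real \<Rightarrow> real \<Rightarrow> real \<Rightarrow> real" where
  "x_eq \<theta> p x =
     (let \<beta> = beta_exp \<theta> p; N = N_ratio \<theta> p in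
      \<theta>*(6 - p)*(x powr \<beta> - N)*x
      - (2*p*\<theta> - 3*(p - 2)) * (\<theta>*(x powr \<beta> - N) + (1 - \<theta>)*(x - 1)*N))"

definition x_star :: "real \<Rightarrow> real \<Rightarrow> real" where
  "x_star \<theta> p =
     (THE x. N_ratio \<theta> p powr (1 / beta_exp \<theta> p) < x \<and> x_eq \<theta> p x = 0)"

definition Lambda2 :: "real \<Rightarrow> real \<Rightarrow> nat \<Rightarrow> real" where
  "Lambda2 \<theta> p d = (real d - 1) / 4 * (2*p*\<theta> - 3*(p - 2)) / ((p - 2) * x_star \<theta> p)"

end

theory Submission
  imports Defs "HOL-Real_Asymp.Real_Asymp"
begin

text \<open>
  The number \<open>x\<^sup>*\<close> is the root beyond \<open>x\<^sub>0 = N\<^sup>1\<^sup>/\<^sup>\<beta>\<close> of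
  \<open>E(x) = \<theta>(x\<^sup>\<beta> - N)((6-p)x - \<alpha>) - \<alpha>(1-\<theta>)(x-1)N\<close>, a convex function of \<open>x > 0\<close>.
  Once \<open>N > 1\<close> is known, \<open>E(x\<^sub>0) < 0\<close>, so this root is unique, and bounding
  \<open>(x\<^sup>\<beta> - N)((6-p)x - \<alpha>)\<close> at the root from below by its tangent at \<open>x\<^sub>0\<close> gives a
  linear inequality for \<open>x\<^sup>*\<close>, which is the claimed lower bound for \<open>\<Lambda>\<^sub>2 = C/x\<^sup>*\<close>.

  The inequality \<open>N > 1\<close> is the analytic part: \<open>ln N\<close> is a positive multiple of
  \<open>m(2/(p-2)) - m(2/(q\<^sup>*-2))\<close> for the log-Gamma expression \<open>m = gamma_half_defect\<close>,
  and \<open>m\<close> is increasing because \<open>\<psi>(x+1) - ln x\<close> is decreasing, i.e. because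
  \<open>\<psi>'(y+1) < 1/y\<close>.
\<close>

section \<open>Digamma and trigamma bounds\<close>

lemma Polygamma_1_plus1_less:
  fixes y :: real
  assumes y: "0 < y"
  shows "Polygamma 1 (y + 1) < 1 / y"
proof -
  have trigamma: "(\<lambda>k. inverse ((y + 1 + of_nat k)^2)) sums Polygamma 1 (y + 1)"
    using Polygamma_LIMSEQ[of "y + 1" 1] y by (simp add: power2_eq_square)
  have telescope: "(\<lambda>k. inverse (y + of_nat k) - inverse (y + of_nat (Suc k))) sums inverse y"
    using telescope_sums'[OF filterlim_compose[OF tendsto_inverse_0
          tendsto_add_filterlim_at_infinity[OF tendsto_const tendsto_of_nat]], of y]
    by simp
  have gap: "0 < (inverse (y + of_nat k) - inverse (y + of_nat (Suc k))) - inverse ((y + 1 + of_nat k)^2)"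
    for k
  proof -
    define u where "u = y + real k"
    have "u > 0" using y by (simp add: u_def)
    then have "inverse u - inverse (u + 1) - inverse ((u + 1)^2) = inverse (u * (u + 1)^2)"
      by (simp add: divide_simps) (simp add: algebra_simps power2_eq_square)
    moreover have "0 < inverse (u * (u + 1)^2)"
      using \<open>u > 0\<close> by simp
    moreover have "y + of_nat (Suc k) = u + 1" "y + 1 + of_nat k = u + 1"
      by (simp_all add: u_def)
    ultimately show ?thesis
      by (simp only: u_def[symmetric])
  qed
  have "0 < inverse y - Polygamma 1 (y + 1)"
    using suminf_pos[OF sums_summable[OF sums_diff[OF telescope trigamma]] gap]
      sums_unique[OF sums_diff[OF telescope trigamma]] by simp
  then show ?thesis by (simp add: inverse_eq_divide)
qed

lemma Digamma_plus1_minus_ln_strict_antimono: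
  fixes x z :: real
  assumes "0 < x" "x < z"
  shows "Digamma (z + 1) - ln z < Digamma (x + 1) - ln x"
proof -
  have "(\<lambda>t. Digamma (t + 1) - ln t) z < (\<lambda>t. Digamma (t + 1) - ln t) x"
  proof (rule DERIV_neg_imp_decreasing[OF assms(2)])
    fix t assume "x \<le> t" "t \<le> z"
    with assms have t: "0 < t" by simp
    then have "t + 1 \<notin> \<int>\<^sub>\<le>\<^sub>0" by (auto elim!: nonpos_Ints_cases)
    with t have "((\<lambda>t. Digamma (t + 1) - ln t) has_real_derivative Polygamma 1 (t + 1) - 1 / t) (at t)"
      by (auto intro!: derivative_eq_intros DERIV_chain2[OF has_field_derivative_Polygamma])
    moreover have "Polygamma 1 (t + 1) - 1 / t < 0"
      using Polygamma_1_plus1_less[OF t] by simp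
    ultimately show "\<exists>y. ((\<lambda>t. Digamma (t + 1) - ln t) has_real_derivative y) (at t) \<and> y < 0"
      by blast
  qed
  then show ?thesis by simp
qed

lemma Digamma_half_shift_less:
  fixes x :: real
  assumes x: "0 < x"
  shows "Digamma (x + 1/2) - Digamma x < ln (x + 1/2) - ln x + 1 / (x * (2*x + 1))"
proof -
  have "Digamma (x + 1/2 + 1) - ln (x + 1/2) < Digamma (x + 1) - ln x"
    using Digamma_plus1_minus_ln_strict_antimono[of x "x + 1/2"] x by simp
  moreover have "Digamma (x + 1/2 + 1) = Digamma (x + 1/2) + 1 / (x + 1/2)"
    using Digamma_plus1[of "x + 1/2"] x by simp
  moreover have "Digamma (x + 1) = Digamma x + 1 / x"
    using Digamma_plus1[of x] x by simp
  moreover have "1 / x - 1 / (x + 1/2) = 1 / (x * (2*x + 1))"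
    using x by (simp add: field_simps)
  ultimately show ?thesis by linarith
qed

definition gamma_half_defect :: "real \<Rightarrow> real" where
  "gamma_half_defect x =
     ln x + (2*x - 1) * (ln (x + 1/2) - ln x) + 2 * ln_Gamma x - 2 * ln_Gamma (x + 1/2)"

lemma gamma_half_defect_strict_mono:
  fixes x y :: real
  assumes "0 < x" "x < y"
  shows "gamma_half_defect x < gamma_half_defect y"
  unfolding gamma_half_defect_def
proof (rule DERIV_pos_imp_increasing[OF assms(2)])
  fix t assume "x \<le> t" "t \<le> y"
  with assms have t: "0 < t" by simp
  define D where "D = 1 / t + 2 * (ln (t + 1/2) - ln t) + (2*t - 1) * (1 / (t + 1/2) - 1 / t)
    + 2 * Digamma t - 2 * Digamma (t + 1/2)"
  have "((\<lambda>x. ln x + (2*x - 1) * (ln (x + 1/2) - ln x) + 2 * ln_Gamma x - 2 * ln_Gamma (x + 1/2))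
      has_real_derivative D) (at t)"
    unfolding D_def using t
    by (auto intro!: derivative_eq_intros has_field_derivative_ln_Gamma_real simp: inverse_eq_divide)
  moreover have "D > 0"
  proof -
    have "1 / t + (2*t - 1) * (1 / (t + 1/2) - 1 / t) = 2 / (t * (2*t + 1))"
      using t by (simp add: divide_simps)
    then show ?thesis
      using Digamma_half_shift_less[OF t] by (simp add: D_def)
  qed
  ultimately show "\<exists>d. ((\<lambda>x. ln x + (2*x - 1) * (ln (x + 1/2) - ln x) + 2 * ln_Gamma x
      - 2 * ln_Gamma (x + 1/2)) has_real_derivative d) (at t) \<and> 0 < d"
    by blast
qed

section \<open>The ratio of optimal constants\<close>

lemma K_CKN_unit_pos:
  fixes \<theta> p :: real
  assumes "2 < p" "0 < \<theta>" "0 < 2*p*\<theta> + 2 - p"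
  shows "0 < K_CKN \<theta> p 1"
proof -
  define c where "c = 2 / (p - 2)"
  have "0 < c" using assms by (simp add: c_def)
  then have "0 < sqrt pi * Gamma c / Gamma (c + 1/2)"
    by (simp add: Gamma_real_pos)
  then show ?thesis
    using assms unfolding K_CKN_def c_def[symmetric] by (intro mult_pos_pos) auto
qed

lemma ln_K_CKN_unit:
  fixes \<theta> p :: real
  assumes p: "2 < p" and \<theta>: "0 < \<theta>" and A: "0 < 2*p*\<theta> + 2 - p"
  shows "ln (K_CKN \<theta> p 1) = \<theta> * ln (2*p*\<theta> / (2*p*\<theta> + 2 - p))
    + (p - 2) / (2*p) * (ln (pi * (2*p*\<theta> + 2 - p) / (2 * (p - 2))) + gamma_half_defect (2 / (p - 2)))"
proof -
  define A where "A = 2*p*\<theta> + 2 - p"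
  define c where "c = 2 / (p - 2)"
  define e where "e = (p - 2) / (2*p)"
  have A0: "0 < A" and c0: "0 < c"
    using p A by (simp_all add: A_def c_def)
  have \<Gamma>0: "0 < Gamma c" "0 < Gamma (c + 1/2)"
    using c0 by (simp_all add: Gamma_real_pos)
  have exponents: "(6 - p) / (2*p) = e * (2*c - 1)" "(p - 2) / p = 2 * e"
    using p by (simp_all add: c_def e_def field_simps)
  have "K_CKN \<theta> p 1 = (A / (p - 2)^2) powr e * (2*p*\<theta> / A) powr \<theta>
      * ((p + 2) / 4) powr (e * (2*c - 1)) * (sqrt pi * Gamma c / Gamma (c + 1/2)) powr (2 * e)"
    unfolding K_CKN_def exponents by (simp add: A_def c_def e_def)
  then have "ln (K_CKN \<theta> p 1) = \<theta> * ln (2*p*\<theta> / A) + e * ln (A / (p - 2)^2)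
      + e * (2*c - 1) * ln ((p + 2) / 4) + 2 * e * ln (sqrt pi * Gamma c / Gamma (c + 1/2))"
    using p \<theta> A0 \<Gamma>0 by (simp add: ln_mult ln_powr)
  also have "ln (A / (p - 2)^2) = ln A + 2 * ln c - 2 * ln 2"
    using p A0 by (simp add: c_def ln_div ln_realpow)
  also have "ln ((p + 2) / 4) = ln (c + 1/2) - ln c"
  proof -
    have "(p + 2) / 4 = (c + 1/2) / c" using p by (simp add: c_def field_simps)
    moreover have "ln ((c + 1/2) / c) = ln (c + 1/2) - ln c"
      using c0 by (intro ln_divide_pos) auto
    ultimately show ?thesis by (simp only:)
  qed
  also have "ln (sqrt pi * Gamma c / Gamma (c + 1/2)) = ln pi / 2 + ln_Gamma c - ln_Gamma (c + 1/2)"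
    using c0 \<Gamma>0 by (simp add: ln_mult ln_div ln_sqrt ln_Gamma_real_pos del: Gamma_real_pos)
  also have "\<theta> * ln (2*p*\<theta> / A) + e * (ln A + 2 * ln c - 2 * ln 2)
      + e * (2*c - 1) * (ln (c + 1/2) - ln c) + 2 * e * (ln pi / 2 + ln_Gamma c - ln_Gamma (c + 1/2))
    = \<theta> * ln (2*p*\<theta> / A) + e * ((ln pi + ln A - 2 * ln 2 + ln c) + gamma_half_defect c)"
    by (simp add: gamma_half_defect_def algebra_simps)
  also have "ln pi + ln A - 2 * ln 2 + ln c = ln (pi * A / (2 * (p - 2)))"
  proof -
    have "pi * A / (2 * (p - 2)) = pi * A * c / 4" using p by (simp add: c_def field_simps)
    moreover have "ln (pi * A * c / 4) = ln pi + ln A + ln c - ln 4"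
      using A0 c0 by (simp add: ln_mult_pos ln_divide_pos)
    moreover have "ln (4::real) = 2 * ln 2"
      using ln_realpow[of 2 2] by simp
    ultimately show ?thesis by (simp only:)
  qed
  finally show ?thesis
    unfolding A_def c_def e_def .
qed

lemma q_star_minus_2:
  fixes \<theta> p :: real
  assumes "p - 2 < p * \<theta>"
  shows "q_star \<theta> p - 2 = 2 * (p - 2) / (2 - p + p*\<theta>)"
  using assms by (simp add: q_star_def field_simps)

lemma ln_N_ratio:
  fixes \<theta> p :: real
  assumes p: "2 < p" and \<theta>: "0 < \<theta>" and pos: "p - 2 < p * \<theta>"
  shows "ln (N_ratio \<theta> p) = (p - 2) / (2*p*\<theta>)
    * (gamma_half_defect (2 / (p - 2)) - gamma_half_defect (2 / (q_star \<theta> p - 2)))"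
proof -
  define q where "q = q_star \<theta> p"
  define D where "D = 2 - p + p*\<theta>"
  define A where "A = 2*p*\<theta> + 2 - p"
  have D0: "0 < D" and A0: "0 < A"
    using pos p \<theta> by (simp_all add: D_def A_def)
  have q: "q = 2*p*\<theta> / D"
    by (simp add: q_def q_star_def D_def algebra_simps)
  have q2: "q - 2 = 2 * (p - 2) / D"
    using q_star_minus_2[OF pos] by (simp add: q_def D_def)
  moreover have "0 < 2 * (p - 2) / D"
    using p D0 by simp
  ultimately have "2 < q"
    by linarith
  have "2*q*1 + 2 - q = (2*p*\<theta> + 2 * D) / D"
    using D0 by (simp add: q field_simps)
  then have Aq: "2*q*1 + 2 - q = 2 * A / D"
    by (simp add: A_def D_def algebra_simps)
  have K1: "0 < K_CKN \<theta> p 1"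
    using K_CKN_unit_pos p \<theta> A0 by (simp add: A_def)
  have K2: "0 < K_CKN 1 q 1"
    using K_CKN_unit_pos \<open>2 < q\<close> by simp
  have "ln (N_ratio \<theta> p) = ln (K_CKN \<theta> p 1) / \<theta> - ln (K_CKN 1 q 1)"
    using K1 K2 by (simp add: N_ratio_def q_def ln_divide_pos)
  also have "ln (K_CKN \<theta> p 1) = \<theta> * ln (2*p*\<theta> / A)
      + (p - 2) / (2*p) * (ln (pi * A / (2 * (p - 2))) + gamma_half_defect (2 / (p - 2)))"
    using ln_K_CKN_unit[OF p \<theta>] A0 by (simp add: A_def)
  also have "ln (K_CKN 1 q 1) = ln (2*p*\<theta> / A)
      + (p - 2) / (2*p*\<theta>) * (ln (pi * A / (2 * (p - 2))) + gamma_half_defect (2 / (q - 2)))"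
  proof -
    have "2*q*1 / (2*q*1 + 2 - q) = 2*p*\<theta> / A"
      unfolding Aq using D0 A0 by (simp add: q field_simps)
    moreover have "pi * (2*q*1 + 2 - q) / (2 * (q - 2)) = pi * A / (2 * (p - 2))"
      unfolding Aq q2 using D0 p by (simp add: field_simps)
    moreover have "(q - 2) / (2*q) = (p - 2) / (2*p*\<theta>)"
      unfolding q2 unfolding q using D0 p \<theta> by (simp add: field_simps)
    moreover have "0 < 2*q*1 + 2 - q"
      using \<open>2 < q\<close> by simp
    ultimately show ?thesis
      using ln_K_CKN_unit[of q 1] \<open>2 < q\<close> by simp
  qed
  also have "(\<theta> * ln (2*p*\<theta> / A)
      + (p - 2) / (2*p) * (ln (pi * A / (2 * (p - 2))) + gamma_half_defect (2 / (p - 2)))) / \<theta>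
    - (ln (2*p*\<theta> / A)
      + (p - 2) / (2*p*\<theta>) * (ln (pi * A / (2 * (p - 2))) + gamma_half_defect (2 / (q - 2))))
    = (p - 2) / (2*p*\<theta>) * (gamma_half_defect (2 / (p - 2)) - gamma_half_defect (2 / (q - 2)))"
    using \<theta> p by (simp add: field_simps)
  finally show ?thesis
    unfolding q_def .
qed

lemma N_ratio_gt_1:
  fixes \<theta> p :: real
  assumes p: "2 < p" and pos: "p - 2 < p * \<theta>" and \<theta>1: "\<theta> < 1"
  shows "1 < N_ratio \<theta> p"
proof -
  have "0 < p * \<theta>"
    using p pos by linarith
  then have \<theta>: "0 < \<theta>"
    using p by (simp add: zero_less_mult_iff)
  define D where "D = 2 - p + p*\<theta>"
  have D0: "0 < D" and D2: "D < 2"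
    using pos p \<theta>1 by (simp_all add: D_def)
  have q2: "q_star \<theta> p - 2 = 2 * (p - 2) / D"
    using q_star_minus_2[OF pos] by (simp add: D_def)
  have "0 < D / (p - 2)" "D / (p - 2) < 2 / (p - 2)"
    using D0 D2 p by (simp_all add: divide_strict_right_mono)
  moreover have "2 / (q_star \<theta> p - 2) = D / (p - 2)"
    unfolding q2 using D0 p by (simp add: field_simps)
  ultimately have "gamma_half_defect (2 / (q_star \<theta> p - 2)) < gamma_half_defect (2 / (p - 2))"
    using gamma_half_defect_strict_mono by simp
  then have "0 < ln (N_ratio \<theta> p)"
    unfolding ln_N_ratio[OF p \<theta> pos] using p \<theta> by simp
  moreover have "0 < N_ratio \<theta> p"
  proof -
    have "0 < K_CKN \<theta> p 1"
      using K_CKN_unit_pos p \<theta> pos by simp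
    moreover have "0 < 2 * (p - 2) / D"
      using p D0 by simp
    then have "0 < K_CKN 1 (q_star \<theta> p) 1"
      using K_CKN_unit_pos q2 by simp
    ultimately show ?thesis
      by (simp add: N_ratio_def)
  qed
  ultimately show ?thesis
    using ln_gt_zero_iff by blast
qed

section \<open>The root of a convex power equation\<close>

lemma powr_product_has_real_derivative:
  fixes a \<alpha> \<beta> c y :: real
  assumes "0 < y"
  shows "((\<lambda>y. (y powr \<beta> - c) * (a*y - \<alpha>)) has_real_derivative
      \<beta> * y powr (\<beta> - 1) * (a*y - \<alpha>) + a * (y powr \<beta> - c)) (at y)"
  using assms by (auto intro!: derivative_eq_intros simp: algebra_simps)

lemma powr_product_derivative_strict_mono:
  fixes a \<alpha> \<beta> c x z :: real
  assumes "0 < x" "x < z" and a: "0 < a" and \<alpha>: "0 \<le> \<alpha>" and \<beta>: "0 < \<beta>" "\<beta> \<le> 1"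
  shows "\<beta> * x powr (\<beta> - 1) * (a*x - \<alpha>) + a * (x powr \<beta> - c)
       < \<beta> * z powr (\<beta> - 1) * (a*z - \<alpha>) + a * (z powr \<beta> - c)"
  using assms(2)
proof (rule DERIV_pos_imp_increasing)
  fix y assume "x \<le> y" "y \<le> z"
  with assms have y: "0 < y" by simp
  have "((\<lambda>y. \<beta> * y powr (\<beta> - 1) * (a*y - \<alpha>) + a * (y powr \<beta> - c)) has_real_derivative
      \<beta> * ((\<beta> - 1) * y powr (\<beta> - 2)) * (a*y - \<alpha>) + \<beta> * y powr (\<beta> - 1) * a + a * (\<beta> * y powr (\<beta> - 1))) (at y)"
    using y by (auto intro!: derivative_eq_intros simp: algebra_simps)
  moreover have "y powr (\<beta> - 1) = y powr (\<beta> - 2) * y"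
    using y by (simp add: powr_diff power2_eq_square)
  then have "\<beta> * ((\<beta> - 1) * y powr (\<beta> - 2)) * (a*y - \<alpha>) + \<beta> * y powr (\<beta> - 1) * a + a * (\<beta> * y powr (\<beta> - 1))
      = \<beta> * y powr (\<beta> - 2) * ((1 + \<beta>) * a * y + (1 - \<beta>) * \<alpha>)"
    by (simp add: algebra_simps)
  moreover have "0 < \<beta> * y powr (\<beta> - 2) * ((1 + \<beta>) * a * y + (1 - \<beta>) * \<alpha>)"
    using y a \<alpha> \<beta> by (intro mult_pos_pos add_pos_nonneg) auto
  ultimately show "\<exists>d. ((\<lambda>y. \<beta> * y powr (\<beta> - 1) * (a*y - \<alpha>) + a * (y powr \<beta> - c))
      has_real_derivative d) (at y) \<and> 0 < d"
    by auto
qed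

lemma powr_product_above_tangent:
  fixes a \<alpha> \<beta> c x0 x :: real
  assumes "0 < x0" "x0 < x" and "0 < a" "0 \<le> \<alpha>" "0 < \<beta>" "\<beta> \<le> 1"
  shows "(x0 powr \<beta> - c) * (a*x0 - \<alpha>)
      + (x - x0) * (\<beta> * x0 powr (\<beta> - 1) * (a*x0 - \<alpha>) + a * (x0 powr \<beta> - c))
    < (x powr \<beta> - c) * (a*x - \<alpha>)"
proof -
  have "((\<lambda>y. (y powr \<beta> - c) * (a*y - \<alpha>)) has_real_derivative
      \<beta> * y powr (\<beta> - 1) * (a*y - \<alpha>) + a * (y powr \<beta> - c)) (at y)" if "x0 \<le> y" for y
    using powr_product_has_real_derivative that assms(1) by simp
  from MVT2[OF \<open>x0 < x\<close> this]
  obtain \<xi> where \<xi>: "x0 < \<xi>" "\<xi> < x"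
    and mvt: "(x powr \<beta> - c) * (a*x - \<alpha>) - (x0 powr \<beta> - c) * (a*x0 - \<alpha>)
      = (x - x0) * (\<beta> * \<xi> powr (\<beta> - 1) * (a*\<xi> - \<alpha>) + a * (\<xi> powr \<beta> - c))"
    by blast
  have "\<beta> * x0 powr (\<beta> - 1) * (a*x0 - \<alpha>) + a * (x0 powr \<beta> - c)
      < \<beta> * \<xi> powr (\<beta> - 1) * (a*\<xi> - \<alpha>) + a * (\<xi> powr \<beta> - c)"
    using powr_product_derivative_strict_mono \<xi> assms by blast
  then have "(x - x0) * (\<beta> * x0 powr (\<beta> - 1) * (a*x0 - \<alpha>) + a * (x0 powr \<beta> - c))
      < (x - x0) * (\<beta> * \<xi> powr (\<beta> - 1) * (a*\<xi> - \<alpha>) + a * (\<xi> powr \<beta> - c))"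
    using \<open>x0 < x\<close> by (intro mult_strict_left_mono) auto
  then show ?thesis
    using mvt by linarith
qed

locale powr_root_problem =
  fixes \<theta> a \<alpha> \<beta> N :: real
  assumes \<theta>: "0 < \<theta>" "\<theta> < 1" and a: "0 < a" and \<alpha>: "0 < \<alpha>"
    and \<beta>: "0 < \<beta>" "\<beta> < 1" and N: "1 < N"
begin

definition E :: "real \<Rightarrow> real" where
  "E x = \<theta> * (x powr \<beta> - N) * (a*x - \<alpha>) - \<alpha> * (1 - \<theta>) * (x - 1) * N"

definition x0 :: real where
  "x0 = N powr (1 / \<beta>)"

lemma x0_gt_1: "1 < x0"
  using N \<beta> powr_less_mono2[of "1 / \<beta>" 1 N] by (simp add: x0_def)

lemma x0_powr: "x0 powr \<beta> = N"
  using N \<beta> by (simp add: x0_def powr_powr)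

lemma E_x0_neg: "E x0 < 0"
  using \<theta> \<alpha> N x0_gt_1 by (simp add: E_def x0_powr)

lemma E_convex: "convex_on {0<..} E"
proof (rule convex_on_realI)
  define E' where "E' y = \<theta> * (\<beta> * y powr (\<beta> - 1) * (a*y - \<alpha>) + a * (y powr \<beta> - N))
    - \<alpha> * (1 - \<theta>) * N" for y
  show "(E has_real_derivative E' y) (at y)" if "y \<in> {0<..}" for y
    unfolding E_def[abs_def] E'_def
    using powr_product_has_real_derivative[of y \<beta> N a \<alpha>] that
    by (auto intro!: derivative_eq_intros simp: algebra_simps)
  show "E' y \<le> E' z" if "y \<in> {0<..}" "z \<in> {0<..}" "y \<le> z" for y z
  proof (cases "y = z")
    case False
    with that have "\<beta> * y powr (\<beta> - 1) * (a*y - \<alpha>) + a * (y powr \<beta> - N)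
        < \<beta> * z powr (\<beta> - 1) * (a*z - \<alpha>) + a * (z powr \<beta> - N)"
      using powr_product_derivative_strict_mono a \<alpha> \<beta> by simp
    then show ?thesis
      using \<theta> by (simp add: E'_def)
  qed simp
qed simp

lemma E_eventually_pos: "eventually (\<lambda>x. 0 < E x) at_top"
  unfolding E_def using \<theta> a \<beta> by real_asymp

lemma E_neg_below_root:
  assumes "x0 < u" "u < w" "E w = 0"
  shows "E u < 0"
proof -
  have "convex_on {x0..w} E"
    using x0_gt_1 by (intro convex_on_subset[OF E_convex]) auto
  then have "E u \<le> (E x0 - E w) / (w - x0) * (w - u) + E w"
    using assms by (intro convex_onD_Icc'') auto
  also have "\<dots> < 0"
    using assms E_x0_neg by (simp add: divide_neg_pos mult_neg_pos)
  finally show ?thesis .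
qed

lemma ex1_root: "\<exists>!r. x0 < r \<and> E r = 0"
proof -
  obtain M where M: "\<And>x. M \<le> x \<Longrightarrow> 0 < E x"
    using E_eventually_pos by (auto simp: eventually_at_top_linorder)
  define X where "X = max M (x0 + 1)"
  have X: "x0 < X" "0 < E X"
    using M by (simp_all add: X_def)
  have "continuous_on {x0..X} E"
    unfolding E_def using x0_gt_1 by (intro continuous_intros) auto
  then obtain r where "x0 \<le> r" "r \<le> X" "E r = 0"
    using IVT'[of E x0 0 X] E_x0_neg X by auto
  moreover have "r \<noteq> x0"
    using \<open>E r = 0\<close> E_x0_neg by auto
  ultimately have "x0 < r \<and> E r = 0"
    by simp
  moreover have "s = r" if "x0 < s" "E s = 0" for s
    using E_neg_below_root[of s r] E_neg_below_root[of r s] that \<open>x0 < r \<and> E r = 0\<close>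
    by (cases s r rule: linorder_cases) auto
  ultimately show ?thesis
    by blast
qed

lemma root_bound:
  assumes "x0 < r" "E r = 0"
  shows "r * (\<beta>*\<theta>*a - \<alpha> * (1 - \<theta> + \<beta>*\<theta> / x0)) < \<beta>*\<theta>*a*x0 - \<alpha> * (\<beta>*\<theta> + 1 - \<theta>)"
proof -
  have x0: "0 < x0"
    using x0_gt_1 by simp
  have "x0 powr (\<beta> - 1) = N / x0"
    using x0 by (simp add: powr_diff x0_powr)
  then have "(r - x0) * (\<beta> * (N / x0) * (a*x0 - \<alpha>)) < (r powr \<beta> - N) * (a*r - \<alpha>)"
    using powr_product_above_tangent[of x0 r a \<alpha> \<beta> N] assms(1) x0 a \<alpha> \<beta>
    by (simp add: x0_powr)
  then have "\<theta> * ((r - x0) * (\<beta> * (N / x0) * (a*x0 - \<alpha>))) < \<theta> * ((r powr \<beta> - N) * (a*r - \<alpha>))"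
    using \<theta> by (intro mult_strict_left_mono) auto
  also have "\<dots> = \<alpha> * (1 - \<theta>) * (r - 1) * N"
    using assms(2) by (simp add: E_def algebra_simps)
  finally have "\<theta> * ((r - x0) * (\<beta> * (N / x0) * (a*x0 - \<alpha>))) < \<alpha> * (1 - \<theta>) * (r - 1) * N" .
  then have "N * (\<theta> * \<beta> * (r - x0) * (a*x0 - \<alpha>) / x0) < N * (\<alpha> * (1 - \<theta>) * (r - 1))"
    by (simp add: algebra_simps)
  then have "\<theta> * \<beta> * (r - x0) * (a*x0 - \<alpha>) / x0 < \<alpha> * (1 - \<theta>) * (r - 1)"
    using N by (simp only: mult_less_cancel_left_pos[of N] zero_less_one less_trans)
  moreover have "\<beta>*\<theta>*a*x0 - \<alpha> * (\<beta>*\<theta> + 1 - \<theta>) - r * (\<beta>*\<theta>*a - \<alpha> * (1 - \<theta> + \<beta>*\<theta> / x0))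
      = \<alpha> * (1 - \<theta>) * (r - 1) - \<theta> * \<beta> * (r - x0) * (a*x0 - \<alpha>) / x0"
    using x0 by (simp add: field_simps)
  ultimately show ?thesis
    by linarith
qed

lemma root_inverse_lower_bound:
  assumes "x0 < r" "E r = 0" and "\<alpha> * (\<beta>*\<theta> + 1 - \<theta>) \<le> \<beta>*\<theta>*a"
  shows "(\<beta>*\<theta>*a - \<alpha> * (1 - \<theta> + \<beta>*\<theta> / x0)) / (\<beta>*\<theta>*a*x0 - \<alpha> * (\<beta>*\<theta> + 1 - \<theta>)) < 1 / r"
proof -
  define Den where "Den = \<beta>*\<theta>*a - \<alpha> * (1 - \<theta> + \<beta>*\<theta> / x0)"
  define Num where "Num = \<beta>*\<theta>*a*x0 - \<alpha> * (\<beta>*\<theta> + 1 - \<theta>)"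
  have "\<beta>*\<theta>*a * 1 < \<beta>*\<theta>*a * x0"
    using x0_gt_1 \<theta> a \<beta> by (intro mult_strict_left_mono) auto
  then have "0 < Num"
    using assms(3) by (simp add: Num_def)
  moreover have "0 < r"
    using assms(1) x0_gt_1 by simp
  moreover have "r * Den < Num"
    using root_bound[OF assms(1,2)] by (simp add: Den_def Num_def)
  ultimately have "Den / Num < 1 / r"
    by (simp add: field_simps)
  then show ?thesis
    by (simp add: Den_def Num_def)
qed

end

lemma crit_exp_le_6:
  assumes "3 \<le> d"
  shows "crit_exp d \<le> 6"
  using assms by (simp add: crit_exp_def field_simps)

lemma beta_exp_margin:
  fixes \<theta> p :: real
  assumes "0 < p" "0 < \<theta>"
  shows "beta_exp \<theta> p * \<theta> * (6 - p) - (2*p*\<theta> - 3*(p - 2)) * (beta_exp \<theta> p * \<theta> + 1 - \<theta>)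
    = 2 * (p - 2) * (1 - \<theta>)"
proof -
  have "beta_exp \<theta> p * \<theta> = \<theta> - (p - 2) / (2*p)"
    using assms by (simp add: beta_exp_def field_simps)
  then have "beta_exp \<theta> p * \<theta> * (6 - p) - (2*p*\<theta> - 3*(p - 2)) * (beta_exp \<theta> p * \<theta> + 1 - \<theta>)
      = (\<theta> - (p - 2) / (2*p)) * (6 - p) - (2*p*\<theta> - 3*(p - 2)) * (1 - (p - 2) / (2*p))"
    by simp
  also have "\<dots> = 2 * (p - 2) * (1 - \<theta>)"
    using assms by (simp add: field_simps)
  finally show ?thesis .
qed

lemma powr_root_problem_parameters:
  assumes p: "2 < p" "p < 6" and \<theta>: "vartheta p 3 < \<theta>" "\<theta> < 1"
  shows "powr_root_problem \<theta> (6 - p) (2*p*\<theta> - 3*(p - 2)) (beta_exp \<theta> p) (N_ratio \<theta> p)"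
proof
  have key: "3 * (p - 2) < 2*p*\<theta>"
    using p \<theta> by (simp add: vartheta_def field_simps)
  then show "0 < 2*p*\<theta> - 3*(p - 2)"
    by simp
  have "p - 2 < p * \<theta>"
    using key p by (simp add: algebra_simps)
  then show "1 < N_ratio \<theta> p"
    using N_ratio_gt_1 p \<theta> by blast
  have "0 < p * \<theta>"
    using key p by (simp add: algebra_simps)
  then show \<theta>0: "0 < \<theta>"
    using p by (simp add: zero_less_mult_iff)
  have "0 < (p - 2) / (2*p*\<theta>)" "(p - 2) / (2*p*\<theta>) < 1"
    using key p \<theta>0 by (simp_all add: field_simps)
  then show "0 < beta_exp \<theta> p" "beta_exp \<theta> p < 1"
    by (simp_all add: beta_exp_def)
qed (use p \<theta> in simp_all)

lemma x_star_powr_root: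
  assumes "2 < p" "p < 6" "vartheta p 3 < \<theta>" "\<theta> < 1"
  shows "powr_root_problem.x0 (beta_exp \<theta> p) (N_ratio \<theta> p) < x_star \<theta> p
    \<and> powr_root_problem.E \<theta> (6 - p) (2*p*\<theta> - 3*(p - 2)) (beta_exp \<theta> p) (N_ratio \<theta> p) (x_star \<theta> p) = 0"
proof -
  interpret powr_root_problem \<theta> "6 - p" "2*p*\<theta> - 3*(p - 2)" "beta_exp \<theta> p" "N_ratio \<theta> p"
    using powr_root_problem_parameters assms by blast
  have "x_eq \<theta> p x = E x" for x
    unfolding x_eq_def E_def Let_def by (simp add: algebra_simps)
  then have "x_star \<theta> p = (THE r. x0 < r \<and> E r = 0)"
    unfolding x_star_def x0_def by simp
  then show ?thesis
    using theI'[OF ex1_root] by simp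
qed

theorem proposition2:
  fixes d :: nat and p \<theta> :: real
  assumes "d \<ge> 2"
    and "(d = 2 \<and> 2 < p \<and> p < 6) \<or> (d \<ge> 3 \<and> 2 < p \<and> p < crit_exp d)"
    and "vartheta p 3 < \<theta>" and "\<theta> < 1"
  shows "let \<alpha> = 2*p*\<theta> - 3*(p - 2); \<beta> = 1 - (p - 2) / (2*p*\<theta>); N = N_ratio \<theta> p in
    Lambda2 \<theta> p d >
      (real d - 1) * \<alpha> / (4 * (p - 2)) *
      ((\<beta>*\<theta>*(6 - p) - \<alpha>*(1 - \<theta> + \<beta>*\<theta>*N powr (-1/\<beta>)))
       / (\<beta>*\<theta>*(6 - p)*N powr (1/\<beta>) - \<alpha>*(\<beta>*\<theta> + 1 - \<theta>)))"
proof -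
  have p: "2 < p" "p < 6"
    using assms(2) crit_exp_le_6[of d] by auto
  define \<alpha> where "\<alpha> = 2*p*\<theta> - 3*(p - 2)"
  define \<beta> where "\<beta> = beta_exp \<theta> p"
  define N where "N = N_ratio \<theta> p"
  interpret powr_root_problem \<theta> "6 - p" \<alpha> \<beta> N
    using powr_root_problem_parameters[OF p assms(3,4)] by (simp add: \<alpha>_def \<beta>_def N_def)
  have "x0 < x_star \<theta> p" "E (x_star \<theta> p) = 0"
    using x_star_powr_root[OF p assms(3,4)] by (simp_all add: \<alpha>_def \<beta>_def N_def)
  moreover have "\<alpha> * (\<beta>*\<theta> + 1 - \<theta>) \<le> \<beta>*\<theta>*(6 - p)"
    using beta_exp_margin[of p \<theta>] p \<theta> assms(4) unfolding \<alpha>_def \<beta>_def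
    by (smt (verit) mult_nonneg_nonneg)
  ultimately have "(\<beta>*\<theta>*(6 - p) - \<alpha> * (1 - \<theta> + \<beta>*\<theta> / x0))
      / (\<beta>*\<theta>*(6 - p)*x0 - \<alpha> * (\<beta>*\<theta> + 1 - \<theta>)) < 1 / x_star \<theta> p"
    by (rule root_inverse_lower_bound)
  then have "(real d - 1) * \<alpha> / (4 * (p - 2)) * ((\<beta>*\<theta>*(6 - p) - \<alpha> * (1 - \<theta> + \<beta>*\<theta> / x0))
      / (\<beta>*\<theta>*(6 - p)*x0 - \<alpha> * (\<beta>*\<theta> + 1 - \<theta>)))
    < (real d - 1) * \<alpha> / (4 * (p - 2)) * (1 / x_star \<theta> p)"
    by (rule mult_strict_left_mono) (use assms(1) p \<alpha> in simp)
  moreover have "Lambda2 \<theta> p d = (real d - 1) * \<alpha> / (4 * (p - 2)) * (1 / x_star \<theta> p)"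
    by (simp add: Lambda2_def \<alpha>_def)
  moreover have "N powr (1/\<beta>) = x0" "N powr (-1/\<beta>) = 1 / x0"
    using N by (simp_all add: x0_def powr_minus_divide)
  ultimately show ?thesis
    unfolding Let_def \<alpha>_def[symmetric] beta_exp_def[symmetric] \<beta>_def[symmetric] N_def[symmetric]
    by simp
qed

end
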